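(* Let $\mathscr A$ be a weight vector of length $n$ and $S\subseteq\{1,\dots,n\}$ with $\Delta_S\ne\emptyset$ in $M^\delta_{0,\mathscr A}$, and let $I$ be a minimal small interval containing $S$. Then for every point of $\Delta_S$, every chord in the collection of chords describing its topological type has $I$ contained entirely in one of the two intervals into which the chord divides $\{1,\dots,n\}$ (no chord separates two elements of $I$).
   Context: A weight vector is $\mathscr A=(a_1,\dots,a_n)$ with $0<a_i\le1$ and $\sum a_i>2$. A nodal genus-zero curve with marked smooth points $x_1,\dots,x_n$ (point $x_i$ of weight $a_i$) is $\mathscr A$-stable if each component has (number of nodes) + (sum of weights of its markings) $>2$, and whenever $x_i$ coincide for all $i\in S$ one has $\sum_{i\in S}a_i\le1$; $\overline M_{0,\mathscr A}$ is Hassett's fine moduli space of such curves, a smooth projective variety. An interval is a set of cyclically consecutive elements of $\{1,\dots,n\}$ (cyclic order $1<\dots<n<1$); it is large if the sum of its weights exceeds $1$ and small otherwise. $M^\delta_{0,\mathscr A}\subset\overline M_{0,\mathscr A}$ is the open subset of curves whose dual graph admits a planar embedding inducing the standard dihedral order on the legs, and such that whenever $x_i=x_j$ for all $i,j\in S$, $S$ is contained in a small interval. Its stratification by topological type has strata indexed by collections of pairwise non-crossing chords of the $n$-gon (sides labeled $1,\dots,n$), each chord dividing the sides into two large intervals, subject to stability of each tile. For $S\subseteq\{1,\dots,n\}$, the coincidence set $\Delta_S\subseteq M^\delta_{0,\mathscr A}$ is the locus where $x_i=x_j$ for all $i,j\in S$. *)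

theory Defs
  imports Complex_Main
begin

definition weight_vector :: "nat \<Rightarrow> (nat \<Rightarrow> real) \<Rightarrow> bool" where
  "weight_vector n a \<longleftrightarrow> (\<forall>i\<in>{1..n}. 0 < a i \<and> a i \<le> 1) \<and> (\<Sum>i\<in>{1..n}. a i) > 2"

definition cyc_interval :: "nat \<Rightarrow> nat set \<Rightarrow> bool" where
  "cyc_interval n J \<longleftrightarrow> (\<exists>s<n. \<exists>k\<le>n. J = (\<lambda>t. (s + t) mod n + 1) ` {..<k})"

definition small_interval :: "nat \<Rightarrow> (nat \<Rightarrow> real) \<Rightarrow> nat set \<Rightarrow> bool" where
  "small_interval n a J \<longleftrightarrow> cyc_interval n J \<and> (\<Sum>i\<in>J. a i) \<le> 1"

definition large_interval :: "nat \<Rightarrow> (nat \<Rightarrow> real) \<Rightarrow> nat set \<Rightarrow> bool" where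
  "large_interval n a J \<longleftrightarrow> cyc_interval n J \<and> (\<Sum>i\<in>J. a i) > 1"

definition min_small_interval :: "nat \<Rightarrow> (nat \<Rightarrow> real) \<Rightarrow> nat set \<Rightarrow> nat set \<Rightarrow> bool" where
  "min_small_interval n a S I \<longleftrightarrow> small_interval n a I \<and> S \<subseteq> I \<and>
     \<not> (\<exists>J. small_interval n a J \<and> S \<subseteq> J \<and> J \<subset> I)"

text \<open>A nodal genus-zero curve is described by: a finite set V of irreducible
  components (each a copy of the complex projective line, modelled as complex option,
  None = infinity), the set E of nodes (edges of the dual graph, a tree), the component
  m i carrying the marked point x_i, its position p i on that component, and the
  position q u w on component u of the node joining u and w.\<close>

definition nbrs :: "'v set set \<Rightarrow> 'v \<Rightarrow> 'v set" where
  "nbrs E u = {w. {u, w} \<in> E}"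

definition adj :: "'v set set \<Rightarrow> 'v \<Rightarrow> 'v \<Rightarrow> bool" where
  "adj E u w \<longleftrightarrow> {u, w} \<in> E"

definition is_tree :: "'v set \<Rightarrow> 'v set set \<Rightarrow> bool" where
  "is_tree V E \<longleftrightarrow> finite V \<and> V \<noteq> {} \<and>
     E \<subseteq> {{u, w} | u w. u \<in> V \<and> w \<in> V \<and> u \<noteq> w} \<and>
     (\<forall>u\<in>V. \<forall>w\<in>V. (adj E)\<^sup>*\<^sup>* u w) \<and> card E + 1 = card V"

definition side :: "'v set set \<Rightarrow> 'v set \<Rightarrow> 'v \<Rightarrow> 'v set" where
  "side E e u = {w. (adj (E - {e}))\<^sup>*\<^sup>* u w}"

definition leg_side :: "nat \<Rightarrow> (nat \<Rightarrow> 'v) \<Rightarrow> 'v set set \<Rightarrow> 'v set \<Rightarrow> 'v \<Rightarrow> nat set" where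
  "leg_side n m E e u = {i \<in> {1..n}. m i \<in> side E e u}"

definition coincide :: "(nat \<Rightarrow> 'v) \<Rightarrow> (nat \<Rightarrow> complex option) \<Rightarrow> nat set \<Rightarrow> bool" where
  "coincide m p T \<longleftrightarrow> (\<forall>i\<in>T. \<forall>j\<in>T. m i = m j \<and> p i = p j)"

definition A_stable_curve ::
  "nat \<Rightarrow> (nat \<Rightarrow> real) \<Rightarrow> 'v set \<Rightarrow> 'v set set \<Rightarrow> (nat \<Rightarrow> 'v) \<Rightarrow> (nat \<Rightarrow> complex option)
    \<Rightarrow> ('v \<Rightarrow> 'v \<Rightarrow> complex option) \<Rightarrow> bool" where
  "A_stable_curve n a V E m p q \<longleftrightarrow>
     is_tree V E \<and>
     (\<forall>i\<in>{1..n}. m i \<in> V) \<and>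
     (\<forall>u\<in>V. inj_on (q u) (nbrs E u)) \<and>
     (\<forall>i\<in>{1..n}. \<forall>w\<in>nbrs E (m i). p i \<noteq> q (m i) w) \<and>
     (\<forall>u\<in>V. real (card (nbrs E u)) + (\<Sum>i\<in>{i\<in>{1..n}. m i = u}. a i) > 2) \<and>
     (\<forall>T\<subseteq>{1..n}. coincide m p T \<longrightarrow> (\<Sum>i\<in>T. a i) \<le> 1)"

text \<open>Points of M^delta: the dual tree is dihedral (every node divides the legs into
  two cyclic intervals, i.e. is a chord of the n-gon), and every coincidence set lies in
  a small interval.\<close>
definition in_M_delta ::
  "nat \<Rightarrow> (nat \<Rightarrow> real) \<Rightarrow> 'v set \<Rightarrow> 'v set set \<Rightarrow> (nat \<Rightarrow> 'v) \<Rightarrow> (nat \<Rightarrow> complex option)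
    \<Rightarrow> ('v \<Rightarrow> 'v \<Rightarrow> complex option) \<Rightarrow> bool" where
  "in_M_delta n a V E m p q \<longleftrightarrow>
     A_stable_curve n a V E m p q \<and>
     (\<forall>e\<in>E. \<forall>u\<in>e. cyc_interval n (leg_side n m E e u)) \<and>
     (\<forall>T\<subseteq>{1..n}. coincide m p T \<longrightarrow> (\<exists>J. small_interval n a J \<and> T \<subseteq> J))"

end

theory Submission
  imports Defs "HOL-Number_Theory.Cong"
begin

text \<open>Cutting a node e = {u, w} of the dual tree splits the legs into the two cyclic intervals
  on the u-side and on the w-side. Each side carries weight > 1: a side with k components
  contains k - 1 nodes besides e, so its degrees sum to 2k - 1, whereas stability asks for more
  than 2k from degrees and weights together. The coincident points x_i, i \<in> S, lie on one
  component, hence S lies in one side L, and the other side is a large set outside L, so some leg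
  lies neither in L nor in the small interval I. Two cyclic intervals avoiding a common point meet
  in a cyclic interval, so I \<inter> L is a small interval containing S, and minimality forces I \<subseteq> L.\<close>

section \<open>Cyclic intervals\<close>

text \<open>For j \<in> {1..n}, cyc_after n j t is the element t + 1 steps after j in the cyclic order, so
  the cyclic intervals avoiding j are exactly the images of segments of {..<n - 1}.\<close>

definition cyc_after :: "nat \<Rightarrow> nat \<Rightarrow> nat \<Rightarrow> nat" where
  "cyc_after n j t = (j + t) mod n + 1"

lemma cyc_after_pred:
  assumes "j \<in> {1..n}"
  shows "cyc_after n j (n - 1) = j"
proof -
  have "j + (n - 1) = (j - 1) + n" using assms by simp
  then have "(j + (n - 1)) mod n = (j - 1 + n) mod n" by (simp only:)
  also have "\<dots> = (j - 1) mod n" by (rule mod_add_self2)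
  also have "\<dots> = j - 1" using assms by (intro mod_less) auto
  finally have "(j + (n - 1)) mod n = j - 1" .
  then show ?thesis using assms unfolding cyc_after_def by simp
qed

lemma inj_on_cyc_after: "inj_on (cyc_after n j) {..<n}"
proof (rule inj_onI)
  fix s t assume "s \<in> {..<n}" "t \<in> {..<n}" "cyc_after n j s = cyc_after n j t"
  then have "[j + s = j + t] (mod n)" by (simp add: cyc_after_def cong_def)
  then have "[s = t] (mod n)" by (simp add: cong_add_lcancel_nat)
  with \<open>s \<in> {..<n}\<close> \<open>t \<in> {..<n}\<close> show "s = t" by (simp add: cong_def)
qed

lemma image_cyc_after_atLeastLessThan:
  "cyc_after n j ` {x..<y} = (\<lambda>t. ((j + x) mod n + t) mod n + 1) ` {..<y - x}"
proof -
  have "{x..<y} = (+) x ` {..<y - x}"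
    by (cases "x \<le> y") (simp_all add: lessThan_atLeast0)
  then show ?thesis by (auto simp: cyc_after_def mod_add_left_eq add.assoc)
qed

lemma cyc_interval_image_cyc_after:
  assumes "0 < n" "y \<le> x + n"
  shows "cyc_interval n (cyc_after n j ` {x..<y})"
proof -
  have "(j + x) mod n < n" "y - x \<le> n" using assms by auto
  then show ?thesis unfolding cyc_interval_def image_cyc_after_atLeastLessThan by blast
qed

lemma cyc_interval_eq_image_cyc_after:
  assumes J: "cyc_interval n J" and j: "j \<in> {1..n}" "j \<notin> J"
  obtains x y where "y < n" "J = cyc_after n j ` {x..<y}"
proof -
  obtain s k where s: "s < n" and k: "k \<le> n" and J_eq: "J = (\<lambda>t. (s + t) mod n + 1) ` {..<k}"
    using J unfolding cyc_interval_def by blast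
  have n: "0 < n" using s by simp
  define x where "x = (s + n - j mod n) mod n"
  have "(j + x) mod n = (j mod n + (s + n - j mod n)) mod n"
    unfolding x_def by (simp add: mod_add_left_eq mod_add_right_eq)
  also have "j mod n + (s + n - j mod n) = s + n"
    using mod_less_divisor[OF n, of j] by linarith
  finally have "(j + x) mod n = s"
    using s by simp
  then have J_shift: "J = cyc_after n j ` {x..<x + k}"
    using J_eq by (simp add: image_cyc_after_atLeastLessThan)
  have "x + k < n"
  proof (rule ccontr)
    assume "\<not> x + k < n"
    moreover have "x < n" using n by (simp add: x_def)
    ultimately have "n - 1 \<in> {x..<x + k}" by auto
    then have "cyc_after n j (n - 1) \<in> J" using J_shift by blast
    then show False using j cyc_after_pred[OF j(1)] by simp
  qed
  with J_shift show thesis by (intro that)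
qed

lemma cyc_interval_Int:
  assumes "cyc_interval n J" "cyc_interval n K" "j \<in> {1..n}" "j \<notin> J" "j \<notin> K"
  shows "cyc_interval n (J \<inter> K)"
proof -
  obtain x y where y: "y < n" and J: "J = cyc_after n j ` {x..<y}"
    by (rule cyc_interval_eq_image_cyc_after[OF assms(1,3,4)])
  obtain x' y' where y': "y' < n" and K: "K = cyc_after n j ` {x'..<y'}"
    by (rule cyc_interval_eq_image_cyc_after[OF assms(2,3,5)])
  have "J \<inter> K = cyc_after n j ` ({x..<y} \<inter> {x'..<y'})"
    unfolding J K by (rule inj_on_image_Int[OF inj_on_cyc_after, symmetric]) (use y y' in auto)
  also have "{x..<y} \<inter> {x'..<y'} = {max x x'..<min y y'}" by auto
  finally show ?thesis
    by (simp only:) (rule cyc_interval_image_cyc_after; use y in linarith)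
qed

lemma cyc_interval_subset: "cyc_interval n J \<Longrightarrow> J \<subseteq> {1..n}"
  unfolding cyc_interval_def by (auto simp: Suc_le_eq)

lemma min_small_interval_subset:
  assumes pos: "\<forall>i\<in>{1..n}. 0 < a i" and I: "min_small_interval n a S I"
    and L: "cyc_interval n L" "S \<subseteq> L"
    and K: "K \<subseteq> {1..n}" "L \<inter> K = {}" "1 < (\<Sum>i\<in>K. a i)"
  shows "I \<subseteq> L"
proof (rule ccontr)
  assume "\<not> I \<subseteq> L"
  then have "I \<inter> L \<subset> I" by blast
  have small_I: "small_interval n a I" and "S \<subseteq> I"
    and minimal: "\<not> (\<exists>J. small_interval n a J \<and> S \<subseteq> J \<and> J \<subset> I)"
    using I by (simp_all add: min_small_interval_def)
  then have cI: "cyc_interval n I" by (simp add: small_interval_def)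
  have small_subset: "(\<Sum>i\<in>T. a i) \<le> 1" if "T \<subseteq> I" for T
  proof -
    have "I \<subseteq> {1..n}" using cyc_interval_subset[OF cI] .
    moreover have "finite I" using finite_subset[OF calculation] by simp
    ultimately have "(\<Sum>i\<in>T. a i) \<le> (\<Sum>i\<in>I. a i)"
      using that pos by (intro sum_mono2) (auto intro: less_imp_le)
    also have "\<dots> \<le> 1" using small_I by (simp add: small_interval_def)
    finally show ?thesis .
  qed
  have "\<not> K \<subseteq> I"
  proof
    assume "K \<subseteq> I"
    with K(3) small_subset[of K] show False by simp
  qed
  then obtain j where "j \<in> K" "j \<notin> I" by blast
  with K(1,2) have "cyc_interval n (I \<inter> L)"
    by (intro cyc_interval_Int[OF cI L(1), of j]) auto
  moreover have "(\<Sum>i\<in>I \<inter> L. a i) \<le> 1" by (rule small_subset) blast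
  ultimately have "small_interval n a (I \<inter> L)" by (simp add: small_interval_def)
  moreover have "S \<subseteq> I \<inter> L" using \<open>S \<subseteq> I\<close> L(2) by blast
  ultimately show False using \<open>I \<inter> L \<subset> I\<close> minimal by blast
qed

section \<open>Cutting a tree at an edge\<close>

definition hops :: "('a \<Rightarrow> 'a \<Rightarrow> bool) \<Rightarrow> 'a \<Rightarrow> 'a \<Rightarrow> nat" where
  "hops R x y = (LEAST k. (R ^^ k) x y)"

lemma relpowp_hops: "R\<^sup>*\<^sup>* x y \<Longrightarrow> (R ^^ hops R x y) x y"
  unfolding hops_def by (rule LeastI_ex) (rule rtranclp_imp_relpowp)

lemma hops_le: "(R ^^ k) x y \<Longrightarrow> hops R x y \<le> k"
  unfolding hops_def by (rule Least_le)

lemma rtranclp_last_step_hops: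
  assumes "R\<^sup>*\<^sup>* x z" "z \<noteq> x"
  shows "\<exists>y. R y z \<and> R\<^sup>*\<^sup>* x y \<and> Suc (hops R x y) = hops R x z"
proof -
  have path: "(R ^^ hops R x z) x z" using relpowp_hops[OF assms(1)] .
  then obtain k where k: "hops R x z = Suc k" using assms(2) by (cases "hops R x z") auto
  with path obtain y where y: "(R ^^ k) x y" "R y z" by (auto elim: relpowp_Suc_E)
  have xy: "R\<^sup>*\<^sup>* x y" using y(1) by (rule relpowp_imp_rtranclp)
  have "hops R x y \<le> k" using hops_le[OF y(1)] .
  moreover have "(R ^^ Suc (hops R x y)) x z" using relpowp_Suc_I[OF relpowp_hops[OF xy] y(2)] .
  then have "hops R x z \<le> Suc (hops R x y)" by (rule hops_le)
  ultimately show ?thesis using k y(2) xy by auto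
qed

lemma symp_adj: "symp (adj F)"
  by (auto intro: sympI simp: adj_def insert_commute)

lemma rtranclp_adj_sym: "(adj F)\<^sup>*\<^sup>* x y \<Longrightarrow> (adj F)\<^sup>*\<^sup>* y x"
  using symp_rtranclp[OF symp_adj] by (rule sympD)

lemma card_reachable_le:
  assumes fin: "finite X" and X: "X = {x. (adj F)\<^sup>*\<^sup>* r x}"
  shows "card X \<le> card {f\<in>F. f \<subseteq> X} + 1"
proof -
  let ?R = "adj F"
  have "\<forall>x\<in>X - {r}. \<exists>y. ?R y x \<and> ?R\<^sup>*\<^sup>* r y \<and> Suc (hops ?R r y) = hops ?R r x"
    using X by (auto intro: rtranclp_last_step_hops)
  then obtain parent where "\<forall>x\<in>X - {r}.
      ?R (parent x) x \<and> ?R\<^sup>*\<^sup>* r (parent x) \<and> Suc (hops ?R r (parent x)) = hops ?R r x"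
    by (rule bchoice[THEN exE])
  then have parent: "?R (parent x) x" "parent x \<in> X" "Suc (hops ?R r (parent x)) = hops ?R r x"
    if "x \<in> X - {r}" for x
    using that X by auto
  have "inj_on (\<lambda>x. {x, parent x}) (X - {r})"
  proof (rule inj_onI)
    fix x y assume xy: "x \<in> X - {r}" "y \<in> X - {r}" "{x, parent x} = {y, parent y}"
    show "x = y"
    proof (rule ccontr)
      assume "x \<noteq> y"
      then have "parent y = x" "parent x = y" using xy(3) unfolding doubleton_eq_iff by blast+
      then show False using parent(3)[OF xy(1)] parent(3)[OF xy(2)] by simp
    qed
  qed
  moreover have "(\<lambda>x. {x, parent x}) ` (X - {r}) \<subseteq> {f\<in>F. f \<subseteq> X}"
  proof (rule image_subsetI)
    fix x assume x: "x \<in> X - {r}"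
    have "{x, parent x} = {parent x, x}" by (rule insert_commute)
    also have "\<dots> \<in> F" using parent(1)[OF x] by (simp add: adj_def)
    finally show "{x, parent x} \<in> {f\<in>F. f \<subseteq> X}" using x parent(2)[OF x] by simp
  qed
  moreover have "finite {f\<in>F. f \<subseteq> X}"
    by (rule finite_subset[of _ "Pow X"]) (use fin in auto)
  ultimately have "card (X - {r}) \<le> card {f\<in>F. f \<subseteq> X}"
    by (rule card_inj_on_le)
  moreover have "r \<in> X" using X by simp
  ultimately show ?thesis using fin by (simp add: card_Diff_singleton)
qed

lemma sum_card_nbrs_le:
  assumes A: "finite A" and F: "finite F" "\<forall>f\<in>F. f \<subseteq> A \<and> card f = 2"
  shows "(\<Sum>v\<in>A. card (nbrs F v)) \<le> 2 * card F"
proof -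
  have fin_nbrs: "finite (nbrs F v)" for v
    by (rule finite_subset[OF _ A]) (use F(2) in \<open>auto simp: nbrs_def\<close>)
  have fin_F: "\<forall>f\<in>F. finite f" using F(2) finite_subset[OF _ A] by blast
  have "(\<Sum>v\<in>A. card (nbrs F v)) = card (SIGMA v:A. nbrs F v)"
    using A fin_nbrs by (simp add: card_SigmaI)
  also have "\<dots> \<le> card (SIGMA f:F. f)"
  proof (rule card_inj_on_le)
    show "inj_on (\<lambda>(v, w). ({v, w}, v)) (SIGMA v:A. nbrs F v)"
      by (auto intro!: inj_onI simp: doubleton_eq_iff)
    show "(\<lambda>(v, w). ({v, w}, v)) ` (SIGMA v:A. nbrs F v) \<subseteq> (SIGMA f:F. f)"
      by (auto simp: nbrs_def)
    show "finite (SIGMA f:F. f)" using F(1) fin_F by auto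
  qed
  also have "\<dots> = 2 * card F"
    using F fin_F by (simp add: card_SigmaI)
  finally show ?thesis .
qed

context
  fixes V :: "'v set" and E :: "'v set set" and e :: "'v set" and u w :: 'v
  assumes tree: "is_tree V E" and e: "e \<in> E" and e_eq: "e = {u, w}"
begin

private lemma tree_facts:
  shows finite_V: "finite V" and finite_E: "finite E" and card_E: "card E + 1 = card V"
    and connected: "\<And>x y. x \<in> V \<Longrightarrow> y \<in> V \<Longrightarrow> (adj E)\<^sup>*\<^sup>* x y"
    and edge: "\<And>f. f \<in> E \<Longrightarrow> \<exists>c d. f = {c, d} \<and> c \<in> V \<and> d \<in> V \<and> c \<noteq> d"
    and u_V: "u \<in> V" and w_V: "w \<in> V"
proof -
  show "finite V" "card E + 1 = card V" "\<And>x y. x \<in> V \<Longrightarrow> y \<in> V \<Longrightarrow> (adj E)\<^sup>*\<^sup>* x y"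
    and edge: "\<And>f. f \<in> E \<Longrightarrow> \<exists>c d. f = {c, d} \<and> c \<in> V \<and> d \<in> V \<and> c \<noteq> d"
    using tree unfolding is_tree_def by blast+
  then have "E \<subseteq> Pow V" by blast
  then show "finite E" using \<open>finite V\<close> by (rule finite_subset[OF _ finite_Pow_iff[THEN iffD2]])
  show "u \<in> V" "w \<in> V" using edge[OF e] e_eq by (auto simp: doubleton_eq_iff)
qed

private lemma edge_card: "f \<in> E \<Longrightarrow> card f = 2"
  unfolding card_2_iff using edge by blast

private lemma edge_subset: "f \<in> E \<Longrightarrow> f \<subseteq> V"
  using edge by blast

private lemma reachable_in_V:
  assumes "(adj (E - {e}))\<^sup>*\<^sup>* x y" "x \<in> V"
  shows "y \<in> V"
  using assms
proof induction
  case (step y z)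
  then have "{y, z} \<subseteq> V" by (intro edge_subset) (simp add: adj_def)
  then show ?case by simp
qed

lemma side_subset: "side E e u \<subseteq> V"
  unfolding side_def using reachable_in_V u_V by blast

lemma side_Int_side: "side E e u \<inter> side E e w = {}"
proof (rule ccontr)
  let ?R = "adj (E - {e})"
  assume "side E e u \<inter> side E e w \<noteq> {}"
  then obtain x where ux: "?R\<^sup>*\<^sup>* u x" and wx: "?R\<^sup>*\<^sup>* w x" unfolding side_def by blast
  have uw: "?R\<^sup>*\<^sup>* u w" using ux rtranclp_adj_sym[OF wx] by (rule rtranclp_trans)
  have lift: "?R\<^sup>*\<^sup>* x y" if "adj E x y" for x y
  proof (cases "{x, y} = e")
    case True
    then have "x = u \<and> y = w \<or> x = w \<and> y = u" using e_eq by (auto simp: doubleton_eq_iff)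
    then show ?thesis using uw rtranclp_adj_sym[OF uw] by (elim disjE conjE) simp_all
  next
    case False
    with that have "?R x y" by (simp add: adj_def)
    then show ?thesis by (rule r_into_rtranclp)
  qed
  have "?R \<le> adj E" by (rule predicate2I) (simp add: adj_def)
  moreover have "adj E \<le> ?R\<^sup>*\<^sup>*" by (rule predicate2I) (rule lift)
  ultimately have same_reach: "(adj E)\<^sup>*\<^sup>* = ?R\<^sup>*\<^sup>*" by (rule rtranclp_subset)
  have "V = {x. ?R\<^sup>*\<^sup>* u x}"
  proof (intro equalityI subsetI)
    fix x assume "x \<in> V"
    then show "x \<in> {x. ?R\<^sup>*\<^sup>* u x}" using connected[OF u_V] same_reach by simp
  next
    fix x assume "x \<in> {x. ?R\<^sup>*\<^sup>* u x}"
    then show "x \<in> V" using reachable_in_V u_V by simp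
  qed
  then have "card V \<le> card {f\<in>E - {e}. f \<subseteq> V} + 1"
    using finite_V by (intro card_reachable_le)
  also have "\<dots> \<le> card (E - {e}) + 1"
    using finite_E by (intro add_right_mono card_mono) auto
  finally show False using card_E card.remove[OF finite_E e] by linarith
qed

lemma V_subset_side_Un_side: "V \<subseteq> side E e u \<union> side E e w"
proof
  fix y assume "y \<in> V"
  then have "(adj E)\<^sup>*\<^sup>* u y" using connected u_V by blast
  then show "y \<in> side E e u \<union> side E e w"
  proof induction
    case base then show ?case by (simp add: side_def)
  next
    case (step y z)
    show ?case
    proof (cases "{y, z} = e")
      case True
      then show ?thesis using e_eq by (auto simp: side_def doubleton_eq_iff)
    next
      case False
      then have "adj (E - {e}) y z" using step(2) by (simp add: adj_def)
      then show ?thesis using step(3) by (auto simp: side_def intro: rtranclp.rtrancl_into_rtrancl)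
    qed
  qed
qed

lemma card_edges_side: "card {f\<in>E - {e}. f \<subseteq> side E e u} + 1 \<le> card (side E e u)"
proof -
  let ?A = "side E e u" and ?B = "side E e w"
  let ?EA = "{f\<in>E - {e}. f \<subseteq> ?A}" and ?EB = "{f\<in>E - {e}. f \<subseteq> ?B}"
  have "?B \<subseteq> V" using reachable_in_V w_V by (auto simp: side_def)
  then have fin: "finite ?A" "finite ?B"
    using side_subset finite_V by (meson finite_subset)+
  have "card ?B \<le> card ?EB + 1"
    using fin(2) by (intro card_reachable_le[where r = w]) (simp_all add: side_def)
  have "?EA \<inter> ?EB = {}"
  proof (rule ccontr)
    assume "?EA \<inter> ?EB \<noteq> {}"
    then obtain f where "f \<in> E" "f \<subseteq> ?A \<inter> ?B" by blast
    then show False using edge[of f] side_Int_side by auto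
  qed
  then have "card ?EA + card ?EB \<le> card (E - {e})"
    using finite_E by (subst card_Un_disjoint[symmetric]) (auto intro: card_mono)
  moreover have "card V \<le> card ?A + card ?B"
    using V_subset_side_Un_side fin by (metis card_Un_le card_mono finite_UnI le_trans)
  moreover have "card E = Suc (card (E - {e}))" using finite_E e by (rule card.remove)
  ultimately show ?thesis
    using \<open>card ?B \<le> card ?EB + 1\<close> card_E by linarith
qed

lemma sum_card_nbrs_side: "(\<Sum>v\<in>side E e u. card (nbrs E v)) + 1 \<le> 2 * card (side E e u)"
proof -
  let ?A = "side E e u"
  let ?EA = "{f\<in>E - {e}. f \<subseteq> ?A}"
  have fin: "finite ?A" using side_subset finite_V by (rule finite_subset)
  have u_A: "u \<in> ?A" by (simp add: side_def)
  have w_A: "w \<notin> ?A" using side_Int_side by (auto simp: side_def)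
  have nbrs_le: "card (nbrs E v) \<le> card (nbrs ?EA v) + (if v = u then 1 else 0)"
    if "v \<in> ?A" for v
  proof -
    have "nbrs E v \<subseteq> (if v = u then insert w (nbrs ?EA v) else nbrs ?EA v)"
    proof
      fix x assume "x \<in> nbrs E v"
      then have vx: "{v, x} \<in> E" by (simp add: nbrs_def)
      show "x \<in> (if v = u then insert w (nbrs ?EA v) else nbrs ?EA v)"
      proof (cases "{v, x} = e")
        case True
        then show ?thesis using e_eq that w_A by (auto simp: doubleton_eq_iff)
      next
        case False
        then have "adj (E - {e}) v x" using vx by (simp add: adj_def)
        then have "x \<in> ?A" using that by (auto simp: side_def intro: rtranclp.rtrancl_into_rtrancl)
        then show ?thesis using vx False that by (auto simp: nbrs_def)
      qed
    qed
    moreover have fin_nbrs: "finite (nbrs ?EA v)"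
      by (rule finite_subset[OF _ fin]) (auto simp: nbrs_def)
    ultimately have "card (nbrs E v) \<le> card (if v = u then insert w (nbrs ?EA v) else nbrs ?EA v)"
      by (intro card_mono) auto
    also have "\<dots> \<le> card (nbrs ?EA v) + (if v = u then 1 else 0)"
      using fin_nbrs by (cases "v = u") (simp_all add: card_insert_if)
    finally show ?thesis .
  qed
  have "(\<Sum>v\<in>?A. card (nbrs E v)) \<le> (\<Sum>v\<in>?A. card (nbrs ?EA v) + (if v = u then 1 else 0))"
    by (intro sum_mono nbrs_le)
  also have "\<dots> = (\<Sum>v\<in>?A. card (nbrs ?EA v)) + 1"
    using fin u_A by (simp add: sum.distrib)
  also have "\<dots> \<le> 2 * card ?EA + 1"
    using fin finite_E edge_card by (intro add_right_mono sum_card_nbrs_le) auto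
  finally show ?thesis using card_edges_side by simp
qed

end

section \<open>Chords of dihedral stable curves\<close>

lemma leg_side_weight_gt_1:
  assumes st: "A_stable_curve n a V E m p q" and e: "e \<in> E" "e = {u, w}"
  shows "1 < (\<Sum>i\<in>leg_side n m E e u. a i)"
proof -
  let ?A = "side E e u"
  have tree: "is_tree V E" using st by (simp add: A_stable_curve_def)
  have A_V: "?A \<subseteq> V" using side_subset[OF tree e] .
  moreover have "finite V" using tree by (simp add: is_tree_def)
  ultimately have fin: "finite ?A" by (rule finite_subset)
  have stable: "\<forall>v\<in>V. 2 < real (card (nbrs E v)) + (\<Sum>i\<in>{i\<in>{1..n}. m i = v}. a i)"
    using st by (simp add: A_stable_curve_def)
  have "?A \<noteq> {}" by (auto simp: side_def)
  then have "(\<Sum>v\<in>?A. 2) < (\<Sum>v\<in>?A. real (card (nbrs E v)) + (\<Sum>i\<in>{i\<in>{1..n}. m i = v}. a i))"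
    using stable A_V fin by (intro sum_strict_mono) auto
  also have "\<dots> = real (\<Sum>v\<in>?A. card (nbrs E v)) + (\<Sum>i\<in>leg_side n m E e u. a i)"
  proof -
    have "(\<Sum>v\<in>?A. \<Sum>i\<in>{i\<in>leg_side n m E e u. m i = v}. a i) = (\<Sum>i\<in>leg_side n m E e u. a i)"
      using fin by (intro sum.group) (auto simp: leg_side_def)
    moreover have "{i\<in>leg_side n m E e u. m i = v} = {i\<in>{1..n}. m i = v}" if "v \<in> ?A" for v
      using that by (auto simp: leg_side_def)
    ultimately show ?thesis by (simp add: sum.distrib)
  qed
  moreover have "real (\<Sum>v\<in>?A. card (nbrs E v)) + 1 \<le> 2 * real (card ?A)"
    using sum_card_nbrs_side[OF tree e] by linarith
  ultimately show ?thesis by simp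
qed

lemma is_tree_edge_eq:
  assumes "is_tree V E" "e \<in> E" "u \<in> e"
  obtains w where "e = {u, w}"
proof -
  have "E \<subseteq> {{u, w} | u w. u \<in> V \<and> w \<in> V \<and> u \<noteq> w}"
    using assms(1) by (simp add: is_tree_def)
  with assms(2) obtain c d where "e = {c, d}" by blast
  with assms(3) have "e = {u, d} \<or> e = {u, c}" by (auto simp: insert_commute)
  with that show thesis by blast
qed

lemma coincide_subset_leg_side:
  assumes tree: "is_tree V E" and e: "e \<in> E" "e = {u, w}" and legs: "\<forall>i\<in>{1..n}. m i \<in> V"
    and S: "S \<subseteq> {1..n}" "coincide m p S"
  shows "S \<subseteq> leg_side n m E e u \<or> S \<subseteq> leg_side n m E e w"
proof (cases "S = {}")
  case False
  then obtain i where "i \<in> S" by blast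
  have side_legs: "S \<subseteq> leg_side n m E e x" if "m i \<in> side E e x" for x
  proof
    fix j assume "j \<in> S"
    then have "m j = m i" using S(2) \<open>i \<in> S\<close> unfolding coincide_def by blast
    then have "m j \<in> side E e x" using that by simp
    with S(1) \<open>j \<in> S\<close> show "j \<in> leg_side n m E e x" by (auto simp: leg_side_def)
  qed
  have "m i \<in> V" using legs S(1) \<open>i \<in> S\<close> by blast
  then have "m i \<in> side E e u \<union> side E e w"
    using V_subset_side_Un_side[OF tree e] by blast
  then show ?thesis using side_legs by blast
qed simp

lemma leg_side_cut:
  assumes M: "in_M_delta n a V E m p q" and e: "e \<in> E" "e = {u, w}"
  shows "cyc_interval n (leg_side n m E e u)" and "leg_side n m E e w \<subseteq> {1..n}"
    and "leg_side n m E e u \<inter> leg_side n m E e w = {}"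
    and "1 < (\<Sum>i\<in>leg_side n m E e w. a i)"
proof -
  have st: "A_stable_curve n a V E m p q" using M by (simp add: in_M_delta_def)
  then have tree: "is_tree V E" by (simp add: A_stable_curve_def)
  show "cyc_interval n (leg_side n m E e u)" using M e by (simp add: in_M_delta_def)
  show "leg_side n m E e w \<subseteq> {1..n}" by (auto simp: leg_side_def)
  show "leg_side n m E e u \<inter> leg_side n m E e w = {}"
    using side_Int_side[OF tree e] by (auto simp: leg_side_def)
  show "1 < (\<Sum>i\<in>leg_side n m E e w. a i)"
    by (rule leg_side_weight_gt_1[OF st e(1), where u = w and w = u])
      (simp add: e(2) insert_commute)
qed

theorem mainTheorem12:
  fixes n :: nat and a :: "nat \<Rightarrow> real" and S I :: "nat set"
    and V :: "'v set" and E :: "'v set set" and m :: "nat \<Rightarrow> 'v"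
    and p :: "nat \<Rightarrow> complex option" and q :: "'v \<Rightarrow> 'v \<Rightarrow> complex option"
  assumes "weight_vector n a"
    and "S \<subseteq> {1..n}"
    and "min_small_interval n a S I"
    and "in_M_delta n a V E m p q"
    and "coincide m p S"
  shows "\<forall>e\<in>E. \<forall>u\<in>e. I \<subseteq> leg_side n m E e u \<or> I \<inter> leg_side n m E e u = {}"
proof (intro ballI)
  fix e u assume e: "e \<in> E" and u: "u \<in> e"
  have tree: "is_tree V E" and legs: "\<forall>i\<in>{1..n}. m i \<in> V"
    using assms(4) by (simp_all add: in_M_delta_def A_stable_curve_def)
  obtain w where w: "e = {u, w}" using is_tree_edge_eq[OF tree e u] .
  then have w': "e = {w, u}" by (simp add: insert_commute)
  have pos: "\<forall>i\<in>{1..n}. 0 < a i" using assms(1) by (simp add: weight_vector_def)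
  note I_inside = min_small_interval_subset[OF pos assms(3)]
  note cut_u = leg_side_cut[OF assms(4) e w] and cut_w = leg_side_cut[OF assms(4) e w']
  from coincide_subset_leg_side[OF tree e w legs assms(2,5)]
  show "I \<subseteq> leg_side n m E e u \<or> I \<inter> leg_side n m E e u = {}"
  proof
    assume "S \<subseteq> leg_side n m E e u"
    then show ?thesis using I_inside[OF cut_u(1) _ cut_u(2-4)] by blast
  next
    assume "S \<subseteq> leg_side n m E e w"
    then have "I \<subseteq> leg_side n m E e w" using I_inside[OF cut_w(1) _ cut_w(2-4)] by blast
    then show ?thesis using cut_u(3) by blast
  qed
qed

end
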